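(* Let $(F,C,(u_f),d,k)$ be an instance of Capacitated $k$-Median, let $A\subseteq F$ with $|A|\le\ell$, and let $d_\ell$ be the $\ell$-centered metric constructed from $A$ (new centers $s^f$ for $f\in A$ at distance $0$ from $f$, a complete graph on the centers with lengths from $d$, each $v\in F\cup C$ joined by one edge of length $d(v,s^v)$ to a closest center $s^v$, and $d_\ell$ the shortest-path metric). Then for every assignment $\phi:C\to F$ (in particular for every feasible solution of the instance with metric $d_\ell$), $$\sum_{c\in C} d_\ell(c,\phi(c))\ \ge\ \sum_{c\in C} d(c,\phi(c)).$$
   Context: Capacitated $k$-Median: facilities $F$ with capacities $u_f\in\mathbb{Z}_{\ge0}$, clients $C$, a metric $d$ on $F\cup C$, an integer $k$; a solution opens at most $k$ facilities and assigns clients to open facilities respecting capacities; its cost under a metric $d'$ is $\sum_c d'(c,\phi(c))$. *)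

theory Defs
  imports "HOL-Library.Extended_Real"
begin

definition metric_on :: "'a set \<Rightarrow> ('a \<Rightarrow> 'a \<Rightarrow> real) \<Rightarrow> bool" where
  "metric_on V d \<longleftrightarrow>
     (\<forall>x\<in>V. d x x = 0) \<and>
     (\<forall>x\<in>V. \<forall>y\<in>V. d x y \<ge> 0 \<and> d x y = d y x) \<and>
     (\<forall>x\<in>V. \<forall>y\<in>V. \<forall>z\<in>V. d x z \<le> d x y + d y z)"

text \<open>Vertices of the l-centered graph: Inl v for original points v, Inr a for the
  new center s^a (a in A). The map s sends each point to (the index of) its chosen
  closest center.\<close>
definition centered_edge ::
  "('a \<Rightarrow> 'a \<Rightarrow> real) \<Rightarrow> 'a set \<Rightarrow> 'a set \<Rightarrow> ('a \<Rightarrow> 'a)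
     \<Rightarrow> ('a + 'a) \<Rightarrow> ('a + 'a) \<Rightarrow> real \<Rightarrow> bool" where
  "centered_edge d V A s x y w \<longleftrightarrow>
     (\<exists>a\<in>A. \<exists>b\<in>A. a \<noteq> b \<and> x = Inr a \<and> y = Inr b \<and> w = d a b) \<or>
     (\<exists>v\<in>V. ((x = Inl v \<and> y = Inr (s v)) \<or> (x = Inr (s v) \<and> y = Inl v)) \<and> w = d v (s v))"

inductive walk :: "('v \<Rightarrow> 'v \<Rightarrow> real \<Rightarrow> bool) \<Rightarrow> 'v \<Rightarrow> 'v \<Rightarrow> real \<Rightarrow> bool"
  for E where
  walk_refl: "walk E x x 0"
| walk_step: "E x y w \<Longrightarrow> walk E y z L \<Longrightarrow> walk E x z (w + L)"

text \<open>The l-centered metric: shortest-path distance (infinite if no path).\<close>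
definition centered_metric ::
  "('a \<Rightarrow> 'a \<Rightarrow> real) \<Rightarrow> 'a set \<Rightarrow> 'a set \<Rightarrow> ('a \<Rightarrow> 'a) \<Rightarrow> 'a \<Rightarrow> 'a \<Rightarrow> ereal" where
  "centered_metric d V A s u v =
     Inf (ereal ` {L. walk (centered_edge d V A s) (Inl u) (Inl v) L})"

end

theory Submission
  imports Defs
begin

text \<open>Each center s^a lies at distance 0 from a, so every edge of the l-centered graph is
  exactly as long as the d-distance between the underlying points.  By the triangle
  inequality every walk is therefore at least as long as the d-distance of its end points,
  so d_l dominates d pointwise and the claim follows by summing over the clients.\<close>

definition underlying_point :: "'a + 'a \<Rightarrow> 'a" where
  "underlying_point = case_sum id id"

lemma underlying_point_simps [simp]:
  "underlying_point (Inl v) = v" "underlying_point (Inr a) = a"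
  by (simp_all add: underlying_point_def)

lemma centered_edge_weight:
  assumes "centered_edge d V A s x y w" and "metric_on V d"
    and "A \<subseteq> V" and "\<forall>v\<in>V. s v \<in> A"
  shows "underlying_point x \<in> V" "underlying_point y \<in> V"
    and "w = d (underlying_point x) (underlying_point y)"
  using assms unfolding centered_edge_def metric_on_def by auto

lemma centered_walk_length_ge_dist:
  assumes "walk (centered_edge d V A s) x z L" and "metric_on V d"
    and "A \<subseteq> V" and "\<forall>v\<in>V. s v \<in> A"
    and "underlying_point x \<in> V" and "underlying_point z \<in> V"
  shows "d (underlying_point x) (underlying_point z) \<le> L"
  using assms
proof (induction rule: walk.induct)
  case (walk_refl x)
  then show ?case by (simp add: metric_on_def)
next
  case (walk_step x y w z L)
  let ?x = "underlying_point x" and ?y = "underlying_point y" and ?z = "underlying_point z"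
  have "?y \<in> V" and "w = d ?x ?y"
    using centered_edge_weight[OF walk_step.hyps(1) walk_step.prems(1-3)] by simp_all
  moreover have "d ?y ?z \<le> L"
    using walk_step.IH walk_step.prems \<open>?y \<in> V\<close> by blast
  moreover have "d ?x ?z \<le> d ?x ?y + d ?y ?z"
    using walk_step.prems \<open>?y \<in> V\<close> unfolding metric_on_def by blast
  ultimately show ?case by linarith
qed

lemma dist_le_centered_metric:
  assumes "metric_on V d" and "A \<subseteq> V" and "\<forall>v\<in>V. s v \<in> A"
    and "u \<in> V" and "v \<in> V"
  shows "ereal (d u v) \<le> centered_metric d V A s u v"
  unfolding centered_metric_def
proof (rule Inf_greatest)
  fix x assume "x \<in> ereal ` {L. walk (centered_edge d V A s) (Inl u) (Inl v) L}"
  then obtain L where "x = ereal L" and "walk (centered_edge d V A s) (Inl u) (Inl v) L"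
    by blast
  then show "ereal (d u v) \<le> x"
    using centered_walk_length_ge_dist[of d V A s "Inl u" "Inl v" L] assms by simp
qed

theorem lemma3:
  fixes F C A :: "'a set" and cap :: "'a \<Rightarrow> nat" and d :: "'a \<Rightarrow> 'a \<Rightarrow> real"
    and k l :: nat and s :: "'a \<Rightarrow> 'a" and \<phi> :: "'a \<Rightarrow> 'a"
  assumes "finite F" and "finite C"
    and "metric_on (F \<union> C) d"
    and "A \<subseteq> F" and "card A \<le> l"
    and "\<forall>v\<in>F \<union> C. s v \<in> A \<and> (\<forall>a\<in>A. d v (s v) \<le> d v a)"
    and "\<forall>c\<in>C. \<phi> c \<in> F"
  shows "(\<Sum>c\<in>C. centered_metric d (F \<union> C) A s c (\<phi> c)) \<ge> (\<Sum>c\<in>C. ereal (d c (\<phi> c)))"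
proof (rule sum_mono)
  fix c assume "c \<in> C"
  have "A \<subseteq> F \<union> C" and "\<forall>v\<in>F \<union> C. s v \<in> A"
    using assms(4,6) by auto
  moreover have "c \<in> F \<union> C" and "\<phi> c \<in> F \<union> C"
    using \<open>c \<in> C\<close> assms(7) by auto
  ultimately show "ereal (d c (\<phi> c)) \<le> centered_metric d (F \<union> C) A s c (\<phi> c)"
    using assms(3) by (intro dist_le_centered_metric)
qed

end
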